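(* For any two symmetric positive definite matrices $\mathbb A,\mathbb B\in\mathbb R^{d\times d}$, $$\mathrm{tr}\big((\log\mathbb A-\log\mathbb B)^2\big)\le-\mathrm{tr}\big((\mathbb A-\mathbb B)(\mathbb A^{-1}-\mathbb B^{-1})\big),$$ and consequently $$|\mathrm{tr}(\log\mathbb A)-\mathrm{tr}(\log\mathbb B)|^2\le-d\,\mathrm{tr}\big((\mathbb A-\mathbb B)(\mathbb A^{-1}-\mathbb B^{-1})\big).$$
   Context: For a symmetric positive definite $\mathbb A=\mathbb O\,\mathrm{diag}(\lambda_i)\mathbb O^{\rm T}$ ($\mathbb O$ orthogonal, $\lambda_i>0$), $\log\mathbb A=\mathbb O\,\mathrm{diag}(\log\lambda_i)\mathbb O^{\rm T}$. *)

theory Defs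
  imports "HOL-Analysis.Analysis"
begin

definition diag_mat :: "real^'n \<Rightarrow> real^'n^'n" where
  "diag_mat v = (\<chi> i j. if i = j then v $ i else 0)"

definition spd :: "real^'n^'n \<Rightarrow> bool" where
  "spd A \<longleftrightarrow> transpose A = A \<and> (\<forall>x. x \<noteq> 0 \<longrightarrow> x \<bullet> (A *v x) > 0)"

text \<open>Matrix logarithm of an SPD matrix via orthogonal diagonalisation
  A = O diag(lambda) O^T, log A = O diag(log lambda) O^T (well defined,
  independent of the choice of diagonalisation).\<close>
definition mat_log :: "real^'n^'n \<Rightarrow> real^'n^'n" where
  "mat_log A = (SOME L. \<exists>Q lam. orthogonal_matrix Q \<and> (\<forall>i. lam $ i > 0) \<and>
       A = Q ** diag_mat lam ** transpose Q \<and>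
       L = Q ** diag_mat (\<chi> i. ln (lam $ i)) ** transpose Q)"

end

theory Submission
  imports Defs
begin

text \<open>Diagonalise \<open>A = Q diag(\<lambda>) Q\<^sup>T\<close> and \<open>B = P diag(\<mu>) P\<^sup>T\<close> and put \<open>C = Q\<^sup>T P\<close>.
  Then \<open>log A\<close>, \<open>log B\<close>, \<open>A\<inverse>\<close>, \<open>B\<inverse>\<close> are diagonal in the same bases, and every trace
  \<open>tr((Q diag(a) Q\<^sup>T - P diag(b) P\<^sup>T)(Q diag(c) Q\<^sup>T - P diag(d) P\<^sup>T))\<close> equals
  \<open>\<Sum>i j. C\<^sub>i\<^sub>j\<^sup>2 (a\<^sub>i - b\<^sub>j)(c\<^sub>i - d\<^sub>j)\<close>. The first inequality therefore reduces, term by term,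
  to the scalar inequality \<open>(ln a - ln b)\<^sup>2 \<le> (a - b)(1/b - 1/a)\<close>, which for \<open>s = \<surd>(a/b) \<ge> 1\<close>
  reads \<open>(2 ln s)\<^sup>2 \<le> (s - 1/s)\<^sup>2\<close>. The second follows by Cauchy--Schwarz:
  \<open>(tr M)\<^sup>2 \<le> d \<Sum>i. M\<^sub>i\<^sub>i\<^sup>2 \<le> d tr(M M\<^sup>T)\<close> for \<open>M = log A - log B\<close>.\<close>

lemma two_ln_le_diff_inverse:
  fixes s :: real
  assumes "1 \<le> s"
  shows "2 * ln s \<le> s - 1 / s"
proof -
  have "(\<lambda>x. x - 1 / x - 2 * ln x) 1 \<le> (\<lambda>x. x - 1 / x - 2 * ln x) s"
  proof (rule DERIV_nonneg_imp_nondecreasing[OF assms])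
    fix x :: real
    assume "1 \<le> x"
    then have "DERIV (\<lambda>x. x - 1 / x - 2 * ln x) x :> (1 - 1 / x)\<^sup>2"
      by (auto intro!: derivative_eq_intros simp: power2_eq_square field_simps)
    then show "\<exists>y. DERIV (\<lambda>x. x - 1 / x - 2 * ln x) x :> y \<and> 0 \<le> y"
      by auto
  qed
  then show ?thesis by simp
qed

lemma ln_diff_squared_le:
  fixes a b :: real
  assumes "0 < a" "0 < b"
  shows "(ln a - ln b)\<^sup>2 \<le> - ((a - b) * (1 / a - 1 / b))"
proof -
  have "(ln a - ln b)\<^sup>2 \<le> - ((a - b) * (1 / a - 1 / b))"
    if "0 < b" "b \<le> a" for a b :: real
  proof -
    define s where "s = sqrt (a / b)"
    have "1 \<le> s" and s2: "s\<^sup>2 = a / b"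
      using that by (simp_all add: s_def)
    have "ln a - ln b = ln (s\<^sup>2)"
      using that s2 by (simp add: ln_div)
    also have "\<dots> = 2 * ln s"
      using \<open>1 \<le> s\<close> by (simp add: ln_realpow)
    finally have "ln a - ln b = 2 * ln s" .
    moreover have "- ((a - b) * (1 / a - 1 / b)) = (s - 1 / s)\<^sup>2"
      using that s2 \<open>1 \<le> s\<close> by (simp add: power2_diff field_simps power2_eq_square)
    moreover have "(2 * ln s)\<^sup>2 \<le> (s - 1 / s)\<^sup>2"
      using two_ln_le_diff_inverse[OF \<open>1 \<le> s\<close>] \<open>1 \<le> s\<close> by (intro power_mono) auto
    ultimately show ?thesis by simp
  qed
  from this[of b a] this[of a b] assms show ?thesis
    by (cases "b \<le> a") (auto simp: power2_commute field_simps)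
qed

lemma linear_coeff_eq_0_if_quadratic_nonpos:
  fixes a b :: real
  assumes "\<And>t. a * t + b * t\<^sup>2 \<le> 0"
  shows "a = 0"
proof (rule ccontr)
  assume "a \<noteq> 0"
  define c where "c = 2 * (\<bar>b\<bar> + 1)"
  have "c > 0" and "c + b > 0"
    by (auto simp: c_def)
  have "a * (a / c) + b * (a / c)\<^sup>2 = a\<^sup>2 / c\<^sup>2 * (c + b)"
    using \<open>c > 0\<close> by (simp add: field_simps power2_eq_square)
  moreover have "a\<^sup>2 / c\<^sup>2 * (c + b) > 0"
    using \<open>a \<noteq> 0\<close> \<open>c > 0\<close> \<open>c + b > 0\<close> by simp
  ultimately show False
    using assms[of "a / c"] by linarith
qed

lemma symmetric_matrix_inner_commute:
  fixes A :: "real^'n^'n"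
  assumes "transpose A = A"
  shows "x \<bullet> (A *v y) = (A *v x) \<bullet> y"
  by (metis assms dot_lmul_matrix transpose_matrix_vector)

text \<open>By maximality, \<open>(v + t w) \<bullet> A (v + t w) - l |v + t w|\<^sup>2\<close> is a nonpositive quadratic in \<open>t\<close>
  for each \<open>w \<in> S\<close>, so its linear coefficient \<open>2 w \<bullet> (A v - l v)\<close> vanishes.\<close>
lemma rayleigh_maximiser_is_eigenvector:
  fixes A :: "real^'n^'n"
  assumes sym: "transpose A = A" and S: "subspace S"
    and inv: "\<And>x. x \<in> S \<Longrightarrow> A *v x \<in> S"
    and "v \<in> S" and "norm v = 1"
    and max: "\<And>y. y \<in> S \<Longrightarrow> y \<bullet> (A *v y) \<le> (v \<bullet> (A *v v)) * (norm y)\<^sup>2"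
  shows "A *v v = (v \<bullet> (A *v v)) *\<^sub>R v"
proof -
  define l where "l = v \<bullet> (A *v v)"
  have orth: "w \<bullet> (A *v v - l *\<^sub>R v) = 0" if "w \<in> S" for w
  proof -
    have "2 * (w \<bullet> (A *v v) - l * (w \<bullet> v)) = 0"
    proof (rule linear_coeff_eq_0_if_quadratic_nonpos)
      fix t :: real
      have "v + t *\<^sub>R w \<in> S"
        using S \<open>v \<in> S\<close> \<open>w \<in> S\<close> by (simp add: subspace_add subspace_scale)
      then have "(v + t *\<^sub>R w) \<bullet> (A *v (v + t *\<^sub>R w)) \<le> l * (norm (v + t *\<^sub>R w))\<^sup>2"
        using max l_def by blast
      moreover have "w \<bullet> (A *v w) \<le> l * (norm w)\<^sup>2"
        using max \<open>w \<in> S\<close> l_def by blast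
      moreover have "v \<bullet> v = 1"
        using \<open>norm v = 1\<close> by (simp add: norm_eq_1)
      ultimately show "2 * (w \<bullet> (A *v v) - l * (w \<bullet> v)) * t
          + (w \<bullet> (A *v w) - l * (norm w)\<^sup>2) * t\<^sup>2 \<le> 0"
        using symmetric_matrix_inner_commute[OF sym, of v w]
        unfolding l_def power2_norm_eq_inner
        by (simp add: matrix_vector_right_distrib matrix_vector_mult_scaleR inner_add_left
            inner_add_right inner_commute power2_eq_square algebra_simps)
    qed
    then show ?thesis
      by (simp add: inner_diff_right)
  qed
  have "A *v v - l *\<^sub>R v \<in> S"
    using S inv \<open>v \<in> S\<close> by (simp add: subspace_diff subspace_scale)
  from orth[OF this] show ?thesis
    by (simp add: l_def)
qed

lemma symmetric_matrix_has_eigenvector_in_invariant_subspace: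
  fixes A :: "real^'n^'n"
  assumes sym: "transpose A = A" and S: "subspace S"
    and inv: "\<And>x. x \<in> S \<Longrightarrow> A *v x \<in> S"
    and "x0 \<in> S" "x0 \<noteq> 0"
  obtains v where "v \<in> S" "norm v = 1" "A *v v = (v \<bullet> (A *v v)) *\<^sub>R v"
proof -
  define K where "K = S \<inter> sphere 0 1"
  have "compact K"
    unfolding K_def by (simp add: S closed_Int_compact closed_subspace)
  moreover have "x0 /\<^sub>R norm x0 \<in> K"
    using assms by (simp add: K_def subspace_scale)
  moreover have "continuous_on K (\<lambda>x. x \<bullet> (A *v x))"
    by (intro continuous_intros linear_continuous_on) (simp add: linear_conv_bounded_linear)
  ultimately obtain v where "v \<in> K" and vmax: "\<And>y. y \<in> K \<Longrightarrow> y \<bullet> (A *v y) \<le> v \<bullet> (A *v v)"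
    using continuous_attains_sup[of K "\<lambda>x. x \<bullet> (A *v x)"] by blast
  then have "v \<in> S" "norm v = 1"
    by (auto simp: K_def)
  have "y \<bullet> (A *v y) \<le> (v \<bullet> (A *v v)) * (norm y)\<^sup>2" if "y \<in> S" for y
  proof (cases "y = 0")
    case False
    then have "y /\<^sub>R norm y \<in> K"
      using S that by (simp add: K_def subspace_scale)
    from vmax[OF this] False show ?thesis
      by (simp add: matrix_vector_mult_scaleR power2_eq_square field_simps)
  qed simp
  with rayleigh_maximiser_is_eigenvector[OF sym S inv \<open>v \<in> S\<close> \<open>norm v = 1\<close>]
  show ?thesis
    using that \<open>v \<in> S\<close> \<open>norm v = 1\<close> by blast
qed

lemma symmetric_matrix_orthonormal_eigenbasis:
  fixes A :: "real^'n^'n"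
  assumes sym: "transpose A = A" and "subspace S" and "\<And>x. x \<in> S \<Longrightarrow> A *v x \<in> S"
  shows "\<exists>B. B \<subseteq> S \<and> pairwise orthogonal B \<and> (\<forall>x\<in>B. norm x = 1) \<and> S \<subseteq> span B \<and>
    (\<forall>x\<in>B. \<exists>c. A *v x = c *\<^sub>R x)"
  using assms(2,3)
proof (induction "dim S" arbitrary: S rule: less_induct)
  case less
  show ?case
  proof (cases "S \<subseteq> {0}")
    case True
    then show ?thesis by (intro exI[of _ "{}"]) auto
  next
    case False
    then obtain x0 where "x0 \<in> S" "x0 \<noteq> 0" by auto
    then obtain v where "v \<in> S" "norm v = 1" and ev: "A *v v = (v \<bullet> (A *v v)) *\<^sub>R v"
      using symmetric_matrix_has_eigenvector_in_invariant_subspace[OF sym less.prems] by blast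
    define S' where "S' = S \<inter> {x. orthogonal v x}"
    have "subspace S'"
      unfolding S'_def by (intro subspace_inter less.prems(1) subspace_orthogonal_to_vector)
    have invariant': "A *v x \<in> S'" if "x \<in> S'" for x
    proof -
      have "v \<bullet> (A *v x) = (v \<bullet> (A *v v)) * (v \<bullet> x)"
        by (subst symmetric_matrix_inner_commute[OF sym], subst ev) simp
      then show ?thesis
        using that less.prems(2) by (simp add: S'_def orthogonal_def)
    qed
    have "dim S' < dim S"
    proof -
      have "v \<notin> S'"
        using \<open>norm v = 1\<close> by (simp add: S'_def orthogonal_def norm_eq_1)
      then have "S' \<subset> S"
        using \<open>v \<in> S\<close> S'_def by blast
      then show ?thesis
        using dim_psubset[of S' S] \<open>subspace S'\<close> less.prems(1) by (metis span_eq_iff)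
    qed
    from less.hyps[OF this \<open>subspace S'\<close> invariant'] obtain B where
      B: "B \<subseteq> S'" "pairwise orthogonal B" "\<forall>x\<in>B. norm x = 1"
        "S' \<subseteq> span B" "\<forall>x\<in>B. \<exists>c. A *v x = c *\<^sub>R x"
      by blast
    have "S \<subseteq> span (insert v B)"
    proof
      fix x
      assume "x \<in> S"
      then have "x - (v \<bullet> x) *\<^sub>R v \<in> S'"
        using \<open>v \<in> S\<close> less.prems(1) \<open>norm v = 1\<close>
        by (simp add: S'_def orthogonal_def subspace_diff subspace_scale inner_diff_right norm_eq_1)
      then have "x - (v \<bullet> x) *\<^sub>R v \<in> span (insert v B)"
        using B(4) span_mono[of B "insert v B"] by auto
      moreover have "(v \<bullet> x) *\<^sub>R v \<in> span (insert v B)"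
        by (simp add: span_base span_scale)
      ultimately have "(x - (v \<bullet> x) *\<^sub>R v) + (v \<bullet> x) *\<^sub>R v \<in> span (insert v B)"
        by (rule span_add)
      then show "x \<in> span (insert v B)"
        by simp
    qed
    moreover have "pairwise orthogonal (insert v B)"
      using B(1,2) unfolding S'_def pairwise_insert by (auto simp: orthogonal_commute)
    moreover have "insert v B \<subseteq> S"
      using B(1) \<open>v \<in> S\<close> by (auto simp: S'_def)
    moreover have "\<forall>x\<in>insert v B. norm x = 1" "\<forall>x\<in>insert v B. \<exists>c. A *v x = c *\<^sub>R x"
      using B(3,5) \<open>norm v = 1\<close> ev by blast+
    ultimately show ?thesis
      by blast
  qed
qed

lemma symmetric_matrix_orthogonal_eigenvectors:
  fixes A :: "real^'n^'n"
  assumes "transpose A = A"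
  obtains Q lam where "orthogonal_matrix Q" "\<And>j. A *v column j Q = lam $ j *\<^sub>R column j Q"
proof -
  obtain B where B: "pairwise orthogonal B" "\<forall>x\<in>B. norm x = 1" "span B = UNIV"
      "\<forall>x\<in>B. \<exists>c. A *v x = c *\<^sub>R x"
    using symmetric_matrix_orthonormal_eigenbasis[OF assms, of UNIV] by auto
  have "independent B"
    using B(1,2) pairwise_orthogonal_independent by force
  then have "finite B" "card B = CARD('n)"
    using dim_span_eq_card_independent[of B] B(3) by (auto simp: independent_imp_finite)
  then obtain g where g: "bij_betw g (UNIV :: 'n set) B"
    using finite_same_card_bij[of "UNIV :: 'n set" B] by auto
  define Q :: "real^'n^'n" where "Q = (\<chi> i j. g j $ i)"
  have col: "column j Q = g j" for j
    by (simp add: Q_def column_def vec_eq_iff)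
  have "\<forall>j. \<exists>c. A *v g j = c *\<^sub>R g j"
    using B(4) bij_betwE[OF g] by blast
  then obtain lam where "\<And>j. A *v g j = lam j *\<^sub>R g j"
    by metis
  moreover have "orthogonal_matrix Q"
    unfolding orthogonal_matrix_orthonormal_columns col
  proof (intro conjI allI impI)
    show "norm (g j) = 1" for j
      using B(2) bij_betwE[OF g] by blast
    show "orthogonal (g j) (g k)" if "j \<noteq> k" for j k
      using B(1) bij_betwE[OF g] bij_betw_imp_inj_on[OF g] that
      unfolding pairwise_def inj_on_def by blast
  qed
  ultimately show ?thesis
    using that[of Q "\<chi> j. lam j"] col by simp
qed

lemma diag_mat_mult_nth: "(diag_mat a ** M) $ i $ k = a $ i * M $ i $ k"
  by (simp add: diag_mat_def matrix_matrix_mult_def if_distrib if_distribR sum.delta cong: if_cong)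

lemma mult_diag_mat_nth: "(M ** diag_mat b) $ i $ k = M $ i $ k * b $ k"
  by (simp add: diag_mat_def matrix_matrix_mult_def if_distrib if_distribR sum.delta' cong: if_cong)

lemma diag_mat_mult_diag_mat: "diag_mat a ** diag_mat b = diag_mat (\<chi> i. a $ i * b $ i)"
  by (simp add: vec_eq_iff diag_mat_mult_nth) (simp add: diag_mat_def)

lemma diag_mat_one: "diag_mat (\<chi> i. 1) = mat 1"
  by (simp add: diag_mat_def mat_def vec_eq_iff)

lemma transpose_diag_mat: "transpose (diag_mat a) = diag_mat a"
  by (simp add: diag_mat_def transpose_def vec_eq_iff)

lemma matrix_diff_ldistrib: "(A :: 'a::ring_1^'n^'m) ** (B - C) = A ** B - A ** C"
  by (simp add: vec_eq_iff matrix_matrix_mult_def right_diff_distrib sum_subtractf)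

lemma matrix_diff_rdistrib: "((A :: 'a::ring_1^'n^'m) - B) ** C = A ** C - B ** C"
  by (simp add: vec_eq_iff matrix_matrix_mult_def left_diff_distrib sum_subtractf)

lemma transpose_diff: "transpose ((A :: 'a::ab_group_add^'n^'m) - B) = transpose A - transpose B"
  by (simp add: transpose_def vec_eq_iff)

lemma transpose_conjugate_diag_mat:
  "transpose (Q ** diag_mat a ** transpose Q) = Q ** diag_mat a ** transpose Q"
  by (simp add: matrix_transpose_mul transpose_diag_mat matrix_mul_assoc)

lemma eigencolumns_imp_orthogonal_diagonalization:
  fixes A Q :: "real^'n^'n"
  assumes "orthogonal_matrix Q" and "\<And>j. A *v column j Q = lam $ j *\<^sub>R column j Q"
  shows "A = Q ** diag_mat lam ** transpose Q"
proof -
  have "A ** Q = Q ** diag_mat lam"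
  proof -
    have "(A ** Q) $ i $ j = (A *v column j Q) $ i" for i j
      by (simp add: matrix_matrix_mult_def matrix_vector_mult_def column_def)
    then show ?thesis
      using assms(2) by (simp add: vec_eq_iff mult_diag_mat_nth column_def mult.commute)
  qed
  then have "A ** (Q ** transpose Q) = Q ** diag_mat lam ** transpose Q"
    by (simp add: matrix_mul_assoc)
  with assms(1) show ?thesis
    by (simp add: orthogonal_matrix_def)
qed

lemma spd_orthogonal_diagonalization:
  fixes A :: "real^'n^'n"
  assumes "spd A"
  obtains Q lam where "orthogonal_matrix Q" "\<And>i. lam $ i > 0"
    "A = Q ** diag_mat lam ** transpose Q"
proof -
  have sym: "transpose A = A" and pd: "\<And>x. x \<noteq> 0 \<Longrightarrow> x \<bullet> (A *v x) > 0"
    using assms by (auto simp: spd_def)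
  obtain Q lam where Q: "orthogonal_matrix Q" and ev: "\<And>j. A *v column j Q = lam $ j *\<^sub>R column j Q"
    using symmetric_matrix_orthogonal_eigenvectors[OF sym] by blast
  have "lam $ j > 0" for j
  proof -
    have "norm (column j Q) = 1"
      using Q by (simp add: orthogonal_matrix_orthonormal_columns)
    then have "column j Q \<bullet> (A *v column j Q) = lam $ j"
      using ev[of j] by (simp add: norm_eq_1)
    with pd[of "column j Q"] \<open>norm (column j Q) = 1\<close> show ?thesis
      by force
  qed
  with that Q eigencolumns_imp_orthogonal_diagonalization[OF Q ev] show ?thesis
    by blast
qed

lemma mat_log_orthogonal_diagonalization:
  fixes A :: "real^'n^'n"
  assumes "spd A"
  obtains Q lam where "orthogonal_matrix Q" "\<And>i. lam $ i > 0"
    "A = Q ** diag_mat lam ** transpose Q"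
    "mat_log A = Q ** diag_mat (\<chi> i. ln (lam $ i)) ** transpose Q"
proof -
  obtain Q lam where "orthogonal_matrix Q" "\<And>i. lam $ i > 0" "A = Q ** diag_mat lam ** transpose Q"
    using spd_orthogonal_diagonalization[OF assms] by blast
  then have "\<exists>L Q lam. orthogonal_matrix Q \<and> (\<forall>i. lam $ i > 0) \<and>
       A = Q ** diag_mat lam ** transpose Q \<and> L = Q ** diag_mat (\<chi> i. ln (lam $ i)) ** transpose Q"
    by blast
  from someI_ex[OF this] that show ?thesis
    unfolding mat_log_def by blast
qed

lemma matrix_inv_eqI:
  fixes A B :: "'a::semiring_1^'n^'n"
  assumes "A ** B = mat 1" "B ** A = mat 1"
  shows "matrix_inv A = B"
proof -
  have "A ** matrix_inv A = mat 1 \<and> matrix_inv A ** A = mat 1"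
    unfolding matrix_inv_def by (rule someI[of _ B]) (use assms in blast)
  then have "matrix_inv A = (matrix_inv A ** A) ** B"
    using assms(1) by (metis matrix_mul_assoc matrix_mul_rid)
  then show ?thesis
    using \<open>A ** matrix_inv A = mat 1 \<and> matrix_inv A ** A = mat 1\<close> by simp
qed

lemma orthogonal_conjugate_diag_mat_mult:
  fixes Q :: "real^'n^'n"
  assumes "orthogonal_matrix Q"
  shows "(Q ** diag_mat a ** transpose Q) ** (Q ** diag_mat b ** transpose Q)
    = Q ** diag_mat (\<chi> i. a $ i * b $ i) ** transpose Q"
proof -
  have "(Q ** diag_mat a ** transpose Q) ** (Q ** diag_mat b ** transpose Q)
      = Q ** diag_mat a ** (transpose Q ** Q) ** diag_mat b ** transpose Q"
    by (simp add: matrix_mul_assoc)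
  with assms show ?thesis
    by (simp add: orthogonal_matrix_def diag_mat_mult_diag_mat matrix_mul_assoc[symmetric])
qed

lemma matrix_inv_orthogonal_conjugate_diag_mat:
  fixes Q :: "real^'n^'n"
  assumes Q: "orthogonal_matrix Q" and nz: "\<And>i. lam $ i \<noteq> 0"
  shows "matrix_inv (Q ** diag_mat lam ** transpose Q) = Q ** diag_mat (\<chi> i. 1 / lam $ i) ** transpose Q"
proof (rule matrix_inv_eqI)
  have "(\<chi> i. lam $ i * (1 / lam $ i)) = (\<chi> i. 1)" "(\<chi> i. 1 / lam $ i * lam $ i) = (\<chi> i. 1)"
    using nz by (simp_all add: vec_eq_iff)
  with Q show "(Q ** diag_mat lam ** transpose Q) ** (Q ** diag_mat (\<chi> i. 1 / lam $ i) ** transpose Q) = mat 1"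
    and "(Q ** diag_mat (\<chi> i. 1 / lam $ i) ** transpose Q) ** (Q ** diag_mat lam ** transpose Q) = mat 1"
    by (simp_all add: orthogonal_conjugate_diag_mat_mult diag_mat_one orthogonal_matrix_def)
qed

lemma trace_diag_mat_sandwich:
  fixes C :: "real^'n^'n"
  shows "trace (diag_mat a ** C ** diag_mat b ** transpose C) =
    (\<Sum>i\<in>UNIV. \<Sum>j\<in>UNIV. (C $ i $ j)\<^sup>2 * a $ i * b $ j)"
proof -
  have "(C ** diag_mat b ** transpose C) $ i $ i = (\<Sum>j\<in>UNIV. (C $ i $ j)\<^sup>2 * b $ j)" for i
    by (simp add: matrix_matrix_mult_def[of "C ** diag_mat b"] mult_diag_mat_nth transpose_def
        power2_eq_square mult_ac)
  then show ?thesis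
    by (simp add: trace_def matrix_mul_assoc[symmetric] diag_mat_mult_nth sum_distrib_left mult_ac)
qed

lemma trace_conjugate_diag_mat_mult:
  fixes Q P :: "real^'n^'n"
  shows "trace ((Q ** diag_mat a ** transpose Q) ** (P ** diag_mat b ** transpose P)) =
    (\<Sum>i\<in>UNIV. \<Sum>j\<in>UNIV. ((transpose Q ** P) $ i $ j)\<^sup>2 * a $ i * b $ j)"
proof -
  have "trace ((Q ** diag_mat a ** transpose Q) ** (P ** diag_mat b ** transpose P)) =
      trace (Q ** (diag_mat a ** transpose Q ** P ** diag_mat b ** transpose P))"
    by (simp add: matrix_mul_assoc)
  also have "\<dots> = trace ((diag_mat a ** transpose Q ** P ** diag_mat b ** transpose P) ** Q)"
    by (rule trace_mul_sym)
  also have "\<dots> = trace (diag_mat a ** (transpose Q ** P) ** diag_mat b ** transpose (transpose Q ** P))"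
    by (simp add: matrix_mul_assoc matrix_transpose_mul)
  finally show ?thesis
    by (simp add: trace_diag_mat_sandwich)
qed

lemma orthogonal_matrix_row_sum_squares:
  fixes C :: "real^'n^'n"
  assumes "orthogonal_matrix C"
  shows "(\<Sum>j\<in>UNIV. (C $ i $ j)\<^sup>2) = 1"
proof -
  have "(C ** transpose C) $ i $ i = 1"
    using assms by (simp add: orthogonal_matrix_def mat_def)
  then show ?thesis
    by (simp add: matrix_matrix_mult_def transpose_def power2_eq_square)
qed

lemma orthogonal_matrix_column_sum_squares:
  fixes C :: "real^'n^'n"
  assumes "orthogonal_matrix C"
  shows "(\<Sum>i\<in>UNIV. (C $ i $ j)\<^sup>2) = 1"
proof -
  have "orthogonal_matrix (transpose C)"
    using assms by simp
  from orthogonal_matrix_row_sum_squares[OF this, of j] show ?thesis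
    by (simp add: transpose_def)
qed

lemma trace_orthogonal_conjugate_diag_mat:
  fixes Q :: "real^'n^'n"
  assumes "orthogonal_matrix Q"
  shows "trace (Q ** diag_mat a ** transpose Q) = (\<Sum>i\<in>UNIV. a $ i)"
proof -
  have "trace (Q ** diag_mat a ** transpose Q) = trace (diag_mat a ** (transpose Q ** Q))"
    by (metis matrix_mul_assoc trace_mul_sym)
  with assms show ?thesis
    by (simp add: orthogonal_matrix_def trace_def diag_mat_def)
qed

text \<open>The squares of the entries of the orthogonal matrix \<open>Q\<^sup>T P\<close> form a doubly stochastic
  array, so the terms \<open>\<Sum>i. a\<^sub>i c\<^sub>i\<close> and \<open>\<Sum>j. b\<^sub>j d\<^sub>j\<close> coming from \<open>Q Q\<^sup>T = P P\<^sup>T = 1\<close> can be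
  written as double sums with the same weights as the cross terms.\<close>
lemma trace_diff_conjugate_diag_mat_mult:
  fixes Q P :: "real^'n^'n"
  assumes Q: "orthogonal_matrix Q" and P: "orthogonal_matrix P"
  defines "C \<equiv> transpose Q ** P"
  shows "trace ((Q ** diag_mat a ** transpose Q - P ** diag_mat b ** transpose P) **
                (Q ** diag_mat c ** transpose Q - P ** diag_mat d ** transpose P)) =
         (\<Sum>i\<in>UNIV. \<Sum>j\<in>UNIV. (C $ i $ j)\<^sup>2 * ((a $ i - b $ j) * (c $ i - d $ j)))"
proof -
  have C: "orthogonal_matrix C"
    unfolding C_def using Q P by (simp add: orthogonal_matrix_mul)
  have "trace ((Q ** diag_mat a ** transpose Q) ** (Q ** diag_mat c ** transpose Q)) =
      (\<Sum>i\<in>UNIV. \<Sum>j\<in>UNIV. (C $ i $ j)\<^sup>2 * (a $ i * c $ i))"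
    using orthogonal_matrix_row_sum_squares[OF C]
    by (simp add: orthogonal_conjugate_diag_mat_mult[OF Q] trace_orthogonal_conjugate_diag_mat[OF Q]
        sum_distrib_right[symmetric])
  moreover have "trace ((P ** diag_mat b ** transpose P) ** (P ** diag_mat d ** transpose P)) =
      (\<Sum>i\<in>UNIV. \<Sum>j\<in>UNIV. (C $ i $ j)\<^sup>2 * (b $ j * d $ j))"
    using orthogonal_matrix_column_sum_squares[OF C]
    by (subst sum.swap) (simp add: orthogonal_conjugate_diag_mat_mult[OF P]
        trace_orthogonal_conjugate_diag_mat[OF P] sum_distrib_right[symmetric])
  moreover have "trace ((Q ** diag_mat a ** transpose Q) ** (P ** diag_mat d ** transpose P)) =
      (\<Sum>i\<in>UNIV. \<Sum>j\<in>UNIV. (C $ i $ j)\<^sup>2 * (a $ i * d $ j))"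
    by (simp add: trace_conjugate_diag_mat_mult C_def mult_ac)
  moreover have "trace ((P ** diag_mat b ** transpose P) ** (Q ** diag_mat c ** transpose Q)) =
      (\<Sum>i\<in>UNIV. \<Sum>j\<in>UNIV. (C $ i $ j)\<^sup>2 * (b $ j * c $ i))"
    by (subst trace_mul_sym) (simp add: trace_conjugate_diag_mat_mult C_def mult_ac)
  ultimately show ?thesis
    unfolding matrix_diff_ldistrib matrix_diff_rdistrib trace_sub
    by (simp add: sum_subtractf[symmetric] algebra_simps)
qed

lemma trace_squared_le_card_mult_trace_mult_transpose:
  fixes M :: "real^'n^'n"
  shows "(trace M)\<^sup>2 \<le> real CARD('n) * trace (M ** transpose M)"
proof -
  have "(trace M)\<^sup>2 \<le> (\<Sum>i\<in>UNIV. (M $ i $ i)\<^sup>2) * real CARD('n)"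
    unfolding trace_def by (rule sum_squared_le_sum_of_squares)
  also have "(\<Sum>i\<in>UNIV. (M $ i $ i)\<^sup>2) \<le> (\<Sum>i\<in>UNIV. \<Sum>k\<in>UNIV. (M $ i $ k)\<^sup>2)"
    by (intro sum_mono member_le_sum) auto
  also have "\<dots> = trace (M ** transpose M)"
    by (simp add: trace_def matrix_matrix_mult_def transpose_def power2_eq_square)
  finally show ?thesis
    by (simp add: mult.commute)
qed

lemma spd_trace_mat_log_diff_squared_le:
  fixes A B :: "real^'n^'n"
  assumes "spd A" and "spd B"
  shows "trace ((mat_log A - mat_log B) ** (mat_log A - mat_log B))
    \<le> - trace ((A - B) ** (matrix_inv A - matrix_inv B))"
proof -
  obtain Q lam where Q: "orthogonal_matrix Q" and lam: "\<And>i. lam $ i > 0"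
    and A: "A = Q ** diag_mat lam ** transpose Q"
    and logA: "mat_log A = Q ** diag_mat (\<chi> i. ln (lam $ i)) ** transpose Q"
    using mat_log_orthogonal_diagonalization[OF assms(1)] by blast
  obtain P mu where P: "orthogonal_matrix P" and mu: "\<And>j. mu $ j > 0"
    and B: "B = P ** diag_mat mu ** transpose P"
    and logB: "mat_log B = P ** diag_mat (\<chi> j. ln (mu $ j)) ** transpose P"
    using mat_log_orthogonal_diagonalization[OF assms(2)] by blast
  define C where "C = transpose Q ** P"
  have "trace ((mat_log A - mat_log B) ** (mat_log A - mat_log B))
      = (\<Sum>i\<in>UNIV. \<Sum>j\<in>UNIV. (C $ i $ j)\<^sup>2 * (ln (lam $ i) - ln (mu $ j))\<^sup>2)"
    unfolding logA logB C_def trace_diff_conjugate_diag_mat_mult[OF Q P]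
    by (simp add: power2_eq_square)
  also have "\<dots> \<le> (\<Sum>i\<in>UNIV. \<Sum>j\<in>UNIV. (C $ i $ j)\<^sup>2 * - ((lam $ i - mu $ j) * (1 / lam $ i - 1 / mu $ j)))"
    using ln_diff_squared_le lam mu by (intro sum_mono mult_left_mono) auto
  also have "\<dots> = - trace ((A - B) ** (matrix_inv A - matrix_inv B))"
    using lam mu
    by (simp add: A B C_def matrix_inv_orthogonal_conjugate_diag_mat Q P
        trace_diff_conjugate_diag_mat_mult sum_negf less_imp_neq[symmetric])
  finally show ?thesis .
qed

lemma spd_transpose_mat_log: "spd A \<Longrightarrow> transpose (mat_log A) = mat_log A"
  by (metis mat_log_orthogonal_diagonalization transpose_conjugate_diag_mat)

theorem mainTheorem5:
  fixes A B :: "real^'n^'n"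
  assumes "spd A" and "spd B"
  shows "trace ((mat_log A - mat_log B) ** (mat_log A - mat_log B))
           \<le> - trace ((A - B) ** (matrix_inv A - matrix_inv B)) \<and>
         \<bar>trace (mat_log A) - trace (mat_log B)\<bar>\<^sup>2
           \<le> - real CARD('n) * trace ((A - B) ** (matrix_inv A - matrix_inv B))"
proof
  define M where "M = mat_log A - mat_log B"
  have first: "trace (M ** M) \<le> - trace ((A - B) ** (matrix_inv A - matrix_inv B))"
    unfolding M_def using spd_trace_mat_log_diff_squared_le[OF assms] .
  then show "trace ((mat_log A - mat_log B) ** (mat_log A - mat_log B))
      \<le> - trace ((A - B) ** (matrix_inv A - matrix_inv B))"
    by (simp add: M_def)
  have "transpose M = M"
    using assms by (simp add: M_def transpose_diff spd_transpose_mat_log)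
  then have "\<bar>trace M\<bar>\<^sup>2 \<le> real CARD('n) * trace (M ** M)"
    using trace_squared_le_card_mult_trace_mult_transpose[of M] by simp
  also have "\<dots> \<le> - real CARD('n) * trace ((A - B) ** (matrix_inv A - matrix_inv B))"
    using mult_left_mono[OF first, of "real CARD('n)"] by simp
  finally show "\<bar>trace (mat_log A) - trace (mat_log B)\<bar>\<^sup>2
      \<le> - real CARD('n) * trace ((A - B) ** (matrix_inv A - matrix_inv B))"
    by (simp add: M_def trace_sub)
qed

end
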